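(* Let $n\ge1$ and $B,B'\in\mathrm{GL}_n(\mathbb{R})$. Then $\ker L^\Psi_B=\operatorname{Im}L^\Phi_B$ if and only if $\ker L^\Psi_{B'}=\operatorname{Im}L^\Phi_{B'}$.
   Context: $\mathcal{S}^r(\mathbb{R}^n)$ denotes symmetric $r$-linear maps $(\mathbb{R}^n)^r\to\mathbb{R}^n$; $\langle\cdot,\cdot\rangle$ is the Euclidean inner product. For $v\in\mathbb{R}^n$, $Q_v(\xi,\eta)=\langle\xi,\eta\rangle v-\langle\xi,v\rangle\eta-\langle\eta,v\rangle\xi$. For $Q\in\mathcal{S}^2(\mathbb{R}^n)$ and matrices $A,C$: $Q\circ(A,C)(\xi,\eta)=Q(A\xi,C\eta)$, $A\circ Q(\xi,\eta)=A(Q(\xi,\eta))$. For $Q,Q'\in\mathcal{S}^2(\mathbb{R}^n)$, $[Q,Q'](\xi,\eta,\theta)=\{Q(\xi,Q'(\eta,\theta))+Q(\eta,Q'(\theta,\xi))+Q(\theta,Q'(\xi,\eta))\}-\{Q'(\xi,Q(\eta,\theta))+Q'(\eta,Q(\theta,\xi))+Q'(\theta,Q(\xi,\eta))\}$. For $B=(v_1,\dots,v_n)\in\mathrm{GL}_n(\mathbb{R})$ (columns), $L^\Phi_B:M_n(\mathbb{R})^2\to\mathcal{S}^2(\mathbb{R}^n)^n$ is $L^\Phi_B(A',B'')=(A'\circ Q_{v_i}-Q_{v_i}\circ(A',I)-Q_{v_i}\circ(I,A')+Q_{\omega_i})_{1\le i\le n}$ where $B''=(\omega_1,\dots,\omega_n)$,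 and $L^\Psi_B:\mathcal{S}^2(\mathbb{R}^n)^n\to\mathcal{S}^3(\mathbb{R}^n)^{n(n-1)/2}$ is $L^\Psi_B(q_1,\dots,q_n)=([q_i,Q_{v_j}]-[q_j,Q_{v_i}])_{1\le i<j\le n}$. *)

theory Defs
  imports "HOL-Analysis.Analysis"
begin

text \<open>R^n is modelled as real^'n for a finite index type 'n (n = CARD('n) >= 1);
  the index type is linearly ordered so that the index pairs i < j make sense.\<close>

definition sym2 :: "(real^'n \<Rightarrow> real^'n \<Rightarrow> real^'n) set" where
  "sym2 = {Q. bilinear Q \<and> (\<forall>x y. Q x y = Q y x)}"

definition Qv :: "real^'n \<Rightarrow> real^'n \<Rightarrow> real^'n \<Rightarrow> real^'n" where
  "Qv v \<xi> \<eta> = (\<xi> \<bullet> \<eta>) *\<^sub>R v - (\<xi> \<bullet> v) *\<^sub>R \<eta> - (\<eta> \<bullet> v) *\<^sub>R \<xi>"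

definition bracket ::
  "(real^'n \<Rightarrow> real^'n \<Rightarrow> real^'n) \<Rightarrow> (real^'n \<Rightarrow> real^'n \<Rightarrow> real^'n)
   \<Rightarrow> real^'n \<Rightarrow> real^'n \<Rightarrow> real^'n \<Rightarrow> real^'n" where
  "bracket Q Q' \<xi> \<eta> \<theta> =
     (Q \<xi> (Q' \<eta> \<theta>) + Q \<eta> (Q' \<theta> \<xi>) + Q \<theta> (Q' \<xi> \<eta>))
   - (Q' \<xi> (Q \<eta> \<theta>) + Q' \<eta> (Q \<theta> \<xi>) + Q' \<theta> (Q \<xi> \<eta>))"

text \<open>L^Phi_B(A', B'') with B'' = (omega_1..omega_n) given by its columns;
  v_i = column i B.\<close>
definition LPhi :: "real^'n^'n \<Rightarrow> real^'n^'n \<Rightarrow> real^'n^'n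
    \<Rightarrow> 'n \<Rightarrow> real^'n \<Rightarrow> real^'n \<Rightarrow> real^'n" where
  "LPhi B A' B'' i \<xi> \<eta> =
     A' *v (Qv (column i B) \<xi> \<eta>) - Qv (column i B) (A' *v \<xi>) \<eta>
     - Qv (column i B) \<xi> (A' *v \<eta>) + Qv (column i B'') \<xi> \<eta>"

text \<open>Component (i,j), i < j, of L^Psi_B(q_1..q_n).\<close>
definition LPsi :: "real^'n^'n \<Rightarrow> ('n \<Rightarrow> real^'n \<Rightarrow> real^'n \<Rightarrow> real^'n)
    \<Rightarrow> 'n \<Rightarrow> 'n \<Rightarrow> real^'n \<Rightarrow> real^'n \<Rightarrow> real^'n \<Rightarrow> real^'n" where
  "LPsi B q i j = (\<lambda>\<xi> \<eta> \<theta>. bracket (q i) (Qv (column j B)) \<xi> \<eta> \<theta>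
                                - bracket (q j) (Qv (column i B)) \<xi> \<eta> \<theta>)"

definition kerPsi :: "real^('n::{finite,linorder})^('n::{finite,linorder}) \<Rightarrow> (('n::{finite,linorder}) \<Rightarrow> real^('n::{finite,linorder}) \<Rightarrow> real^('n::{finite,linorder}) \<Rightarrow> real^('n::{finite,linorder})) set"
  where
  "kerPsi B = {q. (\<forall>i. q i \<in> sym2) \<and> (\<forall>i j. i < j \<longrightarrow> LPsi B q i j = (\<lambda>_ _ _. 0))}"

definition imPhi :: "real^('n::finite)^'n \<Rightarrow> ('n \<Rightarrow> real^'n \<Rightarrow> real^'n \<Rightarrow> real^'n) set" where
  "imPhi B = {LPhi B A' B'' | A' B''. True}"

end

theory Submission
  imports Defs
begin

text \<open>Replacing \<open>B\<close> by \<open>B P\<close> replaces each \<open>v\<^sub>j\<close> by \<open>\<Sum>\<^sub>i P\<^sub>i\<^sub>j v\<^sub>i\<close>, and since \<open>v \<mapsto> Q\<^sub>v\<close> is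
  linear, the whole complex \<open>L\<^sup>\<Phi>\<^sub>B, L\<^sup>\<Psi>\<^sub>B\<close> is transported by the invertible action
  \<open>(q\<^sub>1,\<dots>,q\<^sub>n) \<mapsto> (\<Sum>\<^sub>i P\<^sub>i\<^sub>j q\<^sub>i)\<^sub>j\<close> of \<open>P\<close> on tuples: it maps \<open>Im L\<^sup>\<Phi>\<^sub>B\<close> onto \<open>Im L\<^sup>\<Phi>\<^sub>B\<^sub>P\<close>
  and, because \<open>L\<^sup>\<Psi>\<close> is bilinear in \<open>(q, B)\<close> and alternating in its index pair,
  \<open>ker L\<^sup>\<Psi>\<^sub>B\<close> onto \<open>ker L\<^sup>\<Psi>\<^sub>B\<^sub>P\<close>. Hence exactness at \<open>B\<close> is equivalent to exactness at
  the identity matrix, for every invertible \<open>B\<close>.\<close>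

definition tuple_mult ::
    "real^'n^'n \<Rightarrow> ('n::finite \<Rightarrow> 'a \<Rightarrow> 'b \<Rightarrow> 'c::real_vector) \<Rightarrow> 'n \<Rightarrow> 'a \<Rightarrow> 'b \<Rightarrow> 'c" where
  "tuple_mult P q = (\<lambda>j x y. \<Sum>i\<in>UNIV. P$i$j *\<^sub>R q i x y)"

lemma tuple_mult_tuple_mult: "tuple_mult P (tuple_mult P' q) = tuple_mult (P' ** P) q"
proof (intro ext)
  fix j x y
  have "tuple_mult P (tuple_mult P' q) j x y = (\<Sum>i\<in>UNIV. \<Sum>k\<in>UNIV. (P$i$j * P'$k$i) *\<^sub>R q k x y)"
    unfolding tuple_mult_def by (simp add: scaleR_sum_right)
  also have "\<dots> = (\<Sum>k\<in>UNIV. \<Sum>i\<in>UNIV. (P$i$j * P'$k$i) *\<^sub>R q k x y)"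
    by (rule sum.swap)
  also have "\<dots> = tuple_mult (P' ** P) q j x y"
    unfolding tuple_mult_def by (simp add: matrix_matrix_mult_def scaleR_sum_left mult.commute)
  finally show "tuple_mult P (tuple_mult P' q) j x y = tuple_mult (P' ** P) q j x y" .
qed

lemma tuple_mult_mat_1 [simp]:
  fixes q :: "'n::finite \<Rightarrow> 'a \<Rightarrow> 'b \<Rightarrow> 'c::real_vector"
  shows "tuple_mult (mat 1) q = q"
proof -
  have "(if a then 1 else 0) *\<^sub>R v = (if a then v else 0)" for a and v :: 'c
    by simp
  then show ?thesis
    unfolding tuple_mult_def by (auto simp: fun_eq_iff mat_def)
qed

lemma linear_sum_scaleR:
  "linear f \<Longrightarrow> f (\<Sum>k\<in>S. a k *\<^sub>R x k) = (\<Sum>k\<in>S. a k *\<^sub>R f (x k))"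
  by (simp add: linear_sum linear_scale o_def)

lemma linear_sum_scaleR_fun:
  assumes "\<And>i. linear (f i)"
  shows "linear (\<lambda>y. \<Sum>i\<in>S. c i *\<^sub>R f i y)"
  using assms
  by (auto intro!: linearI simp: linear_add linear_scale scaleR_add_right sum.distrib
      scaleR_sum_right mult.commute)

lemma tuple_mult_sym2: "(\<And>i. q i \<in> sym2) \<Longrightarrow> tuple_mult P q j \<in> sym2"
  unfolding sym2_def tuple_mult_def bilinear_def
  by (auto intro!: linear_sum_scaleR_fun)

lemma linear_Qv: "linear (\<lambda>v. Qv v x y)"
  unfolding Qv_def by (auto intro!: linearI simp: inner_add_right algebra_simps)

lemma bilinear_Qv: "bilinear (Qv v)"
  unfolding Qv_def bilinear_def
  by (auto intro!: linearI simp: inner_add_left inner_add_right algebra_simps)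

lemma column_matrix_mult: "column j (B ** P) = (\<Sum>i\<in>UNIV. P$i$j *\<^sub>R column i B)"
  by (simp add: vec_eq_iff column_def matrix_matrix_mult_def sum_component mult.commute)

lemma Qv_column_matrix_mult:
  "Qv (column j (B ** P)) = tuple_mult P (\<lambda>i. Qv (column i B)) j"
  using linear_sum_scaleR[OF linear_Qv, of "\<lambda>i. P$i$j" "\<lambda>i. column i B" UNIV]
  by (simp add: fun_eq_iff tuple_mult_def column_matrix_mult)

lemma LPhi_matrix_mult: "LPhi (B ** P) A' (B'' ** P) = tuple_mult P (LPhi B A' B'')"
  unfolding LPhi_def
  by (auto simp: fun_eq_iff Qv_column_matrix_mult tuple_mult_def
      linear_sum_scaleR[OF matrix_vector_mul_linear] scaleR_diff_right scaleR_add_right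
      sum_subtractf sum.distrib)

lemma bracket_sum_scaleR:
  fixes q R :: "'k::finite \<Rightarrow> real^'n \<Rightarrow> real^'n \<Rightarrow> real^'n"
  assumes "\<And>k. bilinear (q k)" and "\<And>l. bilinear (R l)"
  shows "bracket (\<lambda>x y. \<Sum>k\<in>UNIV. a k *\<^sub>R q k x y) (\<lambda>x y. \<Sum>l\<in>UNIV. b l *\<^sub>R R l x y) \<xi> \<eta> \<theta>
    = (\<Sum>k\<in>UNIV. \<Sum>l\<in>UNIV. (a k * b l) *\<^sub>R bracket (q k) (R l) \<xi> \<eta> \<theta>)"
proof -
  have lin: "linear (q k x)" "linear (R l x)" for k l x
    using assms by (auto simp: bilinear_def)
  have q_R: "(\<Sum>k\<in>UNIV. a k *\<^sub>R q k x (\<Sum>l\<in>UNIV. b l *\<^sub>R R l y z))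
      = (\<Sum>k\<in>UNIV. \<Sum>l\<in>UNIV. (a k * b l) *\<^sub>R q k x (R l y z))" for x y z
    by (simp add: linear_sum_scaleR[OF lin(1)] scaleR_sum_right)
  have R_q: "(\<Sum>l\<in>UNIV. b l *\<^sub>R R l x (\<Sum>k\<in>UNIV. a k *\<^sub>R q k y z))
      = (\<Sum>k\<in>UNIV. \<Sum>l\<in>UNIV. (a k * b l) *\<^sub>R R l x (q k y z))" for x y z
    by (simp add: linear_sum_scaleR[OF lin(2)] scaleR_sum_right)
      (subst sum.swap, simp add: mult.commute)
  show ?thesis
    unfolding bracket_def q_R R_q
    by (simp add: scaleR_diff_right scaleR_add_right sum_subtractf sum.distrib)
qed

lemma LPsi_matrix_mult:
  assumes "\<And>i. q i \<in> sym2"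
  shows "LPsi (B ** P) (tuple_mult P q) i j \<xi> \<eta> \<theta>
    = (\<Sum>k\<in>UNIV. \<Sum>l\<in>UNIV. (P$k$i * P$l$j) *\<^sub>R LPsi B q k l \<xi> \<eta> \<theta>)"
proof -
  have expand: "bracket (tuple_mult P q i) (Qv (column j (B ** P))) \<xi> \<eta> \<theta>
     = (\<Sum>k\<in>UNIV. \<Sum>l\<in>UNIV. (P$k$i * P$l$j) *\<^sub>R bracket (q k) (Qv (column l B)) \<xi> \<eta> \<theta>)"
    for i j
    unfolding Qv_column_matrix_mult tuple_mult_def
    using assms by (intro bracket_sum_scaleR bilinear_Qv) (simp add: sym2_def)
  have "(\<Sum>k\<in>UNIV. \<Sum>l\<in>UNIV. (P$k$j * P$l$i) *\<^sub>R bracket (q k) (Qv (column l B)) \<xi> \<eta> \<theta>)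
     = (\<Sum>k\<in>UNIV. \<Sum>l\<in>UNIV. (P$k$i * P$l$j) *\<^sub>R bracket (q l) (Qv (column k B)) \<xi> \<eta> \<theta>)"
    by (subst sum.swap) (simp add: mult.commute)
  then show ?thesis
    unfolding LPsi_def expand
    by (simp add: scaleR_diff_right sum_subtractf)
qed

lemma LPsi_swap: "LPsi B q j i = (\<lambda>\<xi> \<eta> \<theta>. - LPsi B q i j \<xi> \<eta> \<theta>)"
  by (simp add: LPsi_def fun_eq_iff)

lemma LPsi_diag: "LPsi B q i i = (\<lambda>_ _ _. 0)"
  by (simp add: LPsi_def)

lemma kerPsi_iff_LPsi_eq_0:
  "q \<in> kerPsi B \<longleftrightarrow> (\<forall>i. q i \<in> sym2) \<and> (\<forall>i j \<xi> \<eta> \<theta>. LPsi B q i j \<xi> \<eta> \<theta> = 0)"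
proof -
  have "(\<forall>i j. i < j \<longrightarrow> LPsi B q i j = (\<lambda>_ _ _. 0)) \<longleftrightarrow> (\<forall>i j. LPsi B q i j = (\<lambda>_ _ _. 0))"
    by (metis LPsi_swap linorder_neqE LPsi_diag)
  then show ?thesis
    by (auto simp: kerPsi_def fun_eq_iff)
qed

lemma tuple_mult_kerPsi: "q \<in> kerPsi B \<Longrightarrow> tuple_mult P q \<in> kerPsi (B ** P)"
  by (simp add: kerPsi_iff_LPsi_eq_0 tuple_mult_sym2 LPsi_matrix_mult)

lemma tuple_mult_imPhi:
  assumes "q \<in> imPhi B"
  shows "tuple_mult P q \<in> imPhi (B ** P)"
proof -
  obtain A' B'' where "q = LPhi B A' B''"
    using assms by (auto simp: imPhi_def)
  then have "tuple_mult P q = LPhi (B ** P) A' (B'' ** P)"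
    by (simp add: LPhi_matrix_mult)
  then show ?thesis
    unfolding imPhi_def by blast
qed

lemma tuple_mult_mem_iff:
  assumes "P ** P' = mat 1" and "P' ** P = mat 1"
    and "\<And>B P q. q \<in> S B \<Longrightarrow> tuple_mult P q \<in> S (B ** P)"
  shows "q \<in> S (B ** P) \<longleftrightarrow> tuple_mult P' q \<in> S B"
proof
  show "tuple_mult P' q \<in> S B" if "q \<in> S (B ** P)"
    using assms(3)[OF that, of P'] by (simp add: assms(1) flip: matrix_mul_assoc)
  show "q \<in> S (B ** P)" if "tuple_mult P' q \<in> S B"
    using assms(3)[OF that, of P] by (simp add: assms(2) tuple_mult_tuple_mult)
qed

lemma exact_matrix_mult_iff:
  fixes B P :: "real^('n::{finite,linorder})^('n::{finite,linorder})"
  assumes "invertible P"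
  shows "kerPsi (B ** P) = imPhi (B ** P) \<longleftrightarrow> kerPsi B = imPhi B"
proof -
  obtain P' where P': "P ** P' = mat 1" "P' ** P = mat 1"
    using assms by (auto simp: invertible_def)
  note ker = tuple_mult_mem_iff[OF P', of kerPsi, OF tuple_mult_kerPsi]
  note im = tuple_mult_mem_iff[OF P', of imPhi, OF tuple_mult_imPhi]
  have "kerPsi (B ** P) = imPhi (B ** P)
      \<longleftrightarrow> (\<forall>q. tuple_mult P' q \<in> kerPsi B \<longleftrightarrow> tuple_mult P' q \<in> imPhi B)"
    by (simp add: set_eq_iff ker im)
  also have "\<dots> \<longleftrightarrow> (\<forall>r. r \<in> kerPsi B \<longleftrightarrow> r \<in> imPhi B)"
    by (metis P'(1) tuple_mult_tuple_mult tuple_mult_mat_1)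
  finally show ?thesis
    by (simp add: set_eq_iff)
qed

theorem lemma2p11:
  fixes B B' :: "real^('n::{finite,linorder})^('n::{finite,linorder})"
  assumes "invertible B" and "invertible B'"
  shows "kerPsi B = imPhi B \<longleftrightarrow> kerPsi B' = imPhi B'"
  using exact_matrix_mult_iff[OF assms(1), of "mat 1"] exact_matrix_mult_iff[OF assms(2), of "mat 1"]
  by simp

end
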